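(* If $T$ is a tree of order $n\geq 3$ with maximum degree $\Delta(T)$, then $px_k(T)=\Delta(T)$ for each integer $k$ with $3\leq k\leq n$.
   Context: All graphs are finite, simple, undirected and connected. An edge-coloring of a graph assigns a color to each edge (adjacent edges may receive the same color). A tree in an edge-colored graph is proper if any two adjacent edges of the tree receive different colors. For $S\subseteq V(G)$, an $S$-tree is a subgraph of $G$ that is a tree containing all vertices of $S$. For a connected graph $G$ of order $n$ and an integer $k$ with $2\le k\le n$, an edge-coloring of $G$ is a $k$-proper coloring if for every set $S$ of $k$ vertices of $G$ there exists a proper $S$-tree in $G$. The $k$-proper index $px_k(G)$ is the minimum number of colors used in a $k$-proper coloring of $G$. *)

theory Defs
  imports Main
begin

definition simple_graph :: "'a set \<Rightarrow> 'a set set \<Rightarrow> bool" where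
  "simple_graph V E \<longleftrightarrow> finite V \<and>
     (\<forall>e\<in>E. \<exists>u v. e = {u, v} \<and> u \<noteq> v \<and> u \<in> V \<and> v \<in> V)"

definition adj_rel :: "'a set set \<Rightarrow> ('a \<times> 'a) set" where
  "adj_rel E = {(u, v). {u, v} \<in> E}"

definition connected_graph :: "'a set \<Rightarrow> 'a set set \<Rightarrow> bool" where
  "connected_graph V E \<longleftrightarrow> V \<noteq> {} \<and> (\<forall>u\<in>V. \<forall>v\<in>V. (u, v) \<in> (adj_rel E)\<^sup>*)"

definition is_cycle :: "'a set set \<Rightarrow> 'a list \<Rightarrow> bool" where
  "is_cycle E vs \<longleftrightarrow> length vs \<ge> 3 \<and> distinct vs \<and>
     (\<forall>i. Suc i < length vs \<longrightarrow> {vs ! i, vs ! Suc i} \<in> E) \<and>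
     {last vs, hd vs} \<in> E"

definition acyclic_graph :: "'a set set \<Rightarrow> bool" where
  "acyclic_graph E \<longleftrightarrow> (\<nexists>vs. is_cycle E vs)"

definition is_tree :: "'a set \<Rightarrow> 'a set set \<Rightarrow> bool" where
  "is_tree V E \<longleftrightarrow> simple_graph V E \<and> connected_graph V E \<and> acyclic_graph E"

definition degree :: "'a set set \<Rightarrow> 'a \<Rightarrow> nat" where
  "degree E v = card {e \<in> E. v \<in> e}"

definition max_degree :: "'a set \<Rightarrow> 'a set set \<Rightarrow> nat" where
  "max_degree V E = Max (degree E ` V)"

text \<open>Edge-colorings are maps from edges to colours (natural numbers); only
  the values on the edges of the graph matter.\<close>

definition proper_edges :: "('a set \<Rightarrow> nat) \<Rightarrow> 'a set set \<Rightarrow> bool" where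
  "proper_edges c F \<longleftrightarrow>
     (\<forall>e1\<in>F. \<forall>e2\<in>F. e1 \<noteq> e2 \<and> e1 \<inter> e2 \<noteq> {} \<longrightarrow> c e1 \<noteq> c e2)"

definition has_proper_S_tree ::
  "'a set \<Rightarrow> 'a set set \<Rightarrow> ('a set \<Rightarrow> nat) \<Rightarrow> 'a set \<Rightarrow> bool" where
  "has_proper_S_tree V E c S \<longleftrightarrow>
     (\<exists>V' E'. V' \<subseteq> V \<and> E' \<subseteq> E \<and> S \<subseteq> V' \<and> is_tree V' E' \<and> proper_edges c E')"

definition k_proper_coloring ::
  "'a set \<Rightarrow> 'a set set \<Rightarrow> nat \<Rightarrow> ('a set \<Rightarrow> nat) \<Rightarrow> bool" where
  "k_proper_coloring V E k c \<longleftrightarrow>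
     (\<forall>S. S \<subseteq> V \<and> card S = k \<longrightarrow> has_proper_S_tree V E c S)"

definition proper_index :: "nat \<Rightarrow> 'a set \<Rightarrow> 'a set set \<Rightarrow> nat" where
  "proper_index k V E =
     (LEAST m. \<exists>c. k_proper_coloring V E k c \<and> card (c ` E) = m)"

end

theory Submission
  imports Defs "HOL-Library.Transitive_Closure_Table" "HOL-Combinatorics.Transposition"
begin

(* Upper bound: a forest of maximum degree D has a proper edge colouring with D colours.  Edges
   are added one at a time; for a new edge uv pick a colour a free at u and b free at v, and swap
   a and b on the component of v in the old forest, which does not contain u, so that a becomes
   free at both ends.  Such a colouring makes the tree itself a proper S-tree for every S.
   Lower bound: for two neighbours a, b of a vertex v, every subtree containing a and b contains
   the unique a-b path, i.e. both edges va and vb; so already for k \<ge> 2 a k-proper colouring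
   gives distinct colours to all edges at v. *)

lemma acyclic_graph_subset: "acyclic_graph E \<Longrightarrow> F \<subseteq> E \<Longrightarrow> acyclic_graph F"
  unfolding acyclic_graph_def is_cycle_def by blast

lemma acyclic_graph_edge_not_rtrancl:
  assumes "acyclic_graph E" and "{x, y} \<in> E" and "x \<noteq> y"
  shows "(x, y) \<notin> (adj_rel (E - {{x, y}}))\<^sup>*"
proof
  let ?R = "\<lambda>a b. {a, b} \<in> E - {{x, y}}"
  assume "(x, y) \<in> (adj_rel (E - {{x, y}}))\<^sup>*"
  then have "?R\<^sup>*\<^sup>* x y"
    by (simp add: rtranclp_rtrancl_eq adj_rel_def)
  then obtain xs where path: "rtrancl_path ?R x xs y" and dist: "distinct (x # xs)"
    by (auto simp: rtranclp_eq_rtrancl_path elim: rtrancl_path_distinct)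
  have "xs \<noteq> []" using path \<open>x \<noteq> y\<close> by (auto elim: rtrancl_path.cases)
  with path have last: "last xs = y" by (rule rtrancl_path_last)
  have steps: "?R ((x # xs) ! i) (xs ! i)" if "i < length xs" for i
    using rtrancl_path_nth[OF path that] .
  have "length xs \<ge> 2"
  proof (rule ccontr)
    assume "\<not> length xs \<ge> 2"
    with \<open>xs \<noteq> []\<close> have "length xs = 1" by (cases xs) (auto simp: not_less_eq_eq)
    with last have "xs = [y]" by (cases xs) auto
    then show False using steps[of 0] by simp
  qed
  then have "is_cycle E (x # xs)"
    unfolding is_cycle_def using dist steps last \<open>xs \<noteq> []\<close> \<open>{x, y} \<in> E\<close>
    by (auto simp: insert_commute)
  with assms(1) show False unfolding acyclic_graph_def by blast
qed

lemma acyclic_connection_uses_edge: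
  assumes "acyclic_graph E" and "{v, a} \<in> E" "a \<noteq> v" and "{v, b} \<in> E" "b \<noteq> a"
    and "E' \<subseteq> E" and "(a, b) \<in> (adj_rel E')\<^sup>*"
  shows "{v, a} \<in> E'"
proof (rule ccontr)
  assume "{v, a} \<notin> E'"
  with \<open>E' \<subseteq> E\<close> have "adj_rel E' \<subseteq> adj_rel (E - {{a, v}})"
    unfolding adj_rel_def by (auto simp: insert_commute)
  with assms(7) have "(a, b) \<in> (adj_rel (E - {{a, v}}))\<^sup>*"
    using rtrancl_mono by blast
  moreover have "(b, v) \<in> adj_rel (E - {{a, v}})"
    using assms(4,5) unfolding adj_rel_def by (auto simp: insert_commute doubleton_eq_iff)
  ultimately have "(a, v) \<in> (adj_rel (E - {{a, v}}))\<^sup>*"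
    by (rule rtrancl_into_rtrancl)
  with acyclic_graph_edge_not_rtrancl[OF assms(1), of a v] assms(2,3) show False
    by (simp add: insert_commute)
qed

lemma simple_graph_edge_cases:
  assumes "simple_graph V E" and "e \<in> E"
  obtains u v where "e = {u, v}" and "u \<noteq> v" and "u \<in> V" and "v \<in> V"
  using assms unfolding simple_graph_def by blast

lemma simple_graph_finite_edges:
  assumes "simple_graph V E"
  shows "finite E"
proof -
  have "E \<subseteq> Pow V"
    using simple_graph_edge_cases[OF assms] by blast
  with assms show ?thesis unfolding simple_graph_def by (meson finite_Pow_iff finite_subset)
qed

lemma simple_graph_edge_at:
  assumes "simple_graph V E" and "e \<in> E" and "v \<in> e"
  obtains a where "e = {v, a}" and "a \<noteq> v" and "a \<in> V"
proof -
  obtain p q where "e = {p, q}" "p \<noteq> q" "p \<in> V" "q \<in> V"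
    using simple_graph_edge_cases[OF assms(1,2)] .
  with assms(3) that show ?thesis by (auto simp: insert_commute)
qed

lemma degree_insert:
  assumes "finite F" and "e \<notin> F"
  shows "degree (insert e F) x = (if x \<in> e then Suc (degree F x) else degree F x)"
proof -
  have "{f \<in> insert e F. x \<in> f} = (if x \<in> e then insert e {f \<in> F. x \<in> f} else {f \<in> F. x \<in> f})"
    by auto
  with assms show ?thesis unfolding degree_def by auto
qed

lemma degree_le_max_degree:
  assumes "simple_graph V E"
  shows "degree E x \<le> max_degree V E"
proof (cases "x \<in> V")
  case True
  moreover have "finite V" using assms unfolding simple_graph_def by simp
  ultimately show ?thesis unfolding max_degree_def by simp
next
  case False
  then have "{e \<in> E. x \<in> e} = {}"
    using simple_graph_edge_cases[OF assms] by blast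
  then have "degree E x = 0" unfolding degree_def by (simp only: card.empty)
  then show ?thesis by simp
qed

lemma max_degree_attained:
  assumes "simple_graph V E" and "V \<noteq> {}"
  obtains v where "v \<in> V" and "degree E v = max_degree V E"
proof -
  have "finite V" using assms unfolding simple_graph_def by simp
  with assms(2) have "max_degree V E \<in> degree E ` V"
    unfolding max_degree_def by (intro Max_in) auto
  with that show ?thesis by (metis imageE)
qed

lemma exists_color_unused_at:
  assumes "finite F" and "degree F u < D"
  obtains a where "a < D" and "\<forall>f\<in>F. u \<in> f \<longrightarrow> c f \<noteq> a"
proof -
  let ?used = "c ` {f \<in> F. u \<in> f}"
  have "finite ?used" using assms(1) by simp
  moreover have "card ?used \<le> degree F u"
    unfolding degree_def using assms(1) by (intro card_image_le) simp
  with assms(2) have "card ?used < card {..<D}" by simp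
  ultimately have "\<not> {..<D} \<subseteq> ?used" by (meson card_mono not_le)
  with that show ?thesis by blast
qed

lemma proper_edges_insert:
  assumes "proper_edges c F" and "e \<notin> F" and "\<And>f. f \<in> F \<Longrightarrow> f \<inter> e \<noteq> {} \<Longrightarrow> c f \<noteq> a"
  shows "proper_edges (c(e := a)) (insert e F)"
  unfolding proper_edges_def
proof (intro ballI impI)
  fix e1 e2 assume "e1 \<in> insert e F" "e2 \<in> insert e F" and adjacent: "e1 \<noteq> e2 \<and> e1 \<inter> e2 \<noteq> {}"
  then consider "e1 = e" "e2 \<in> F" | "e2 = e" "e1 \<in> F" | "e1 \<in> F" "e2 \<in> F"
    by blast
  then show "(c(e := a)) e1 \<noteq> (c(e := a)) e2"
  proof cases
    case 1
    with adjacent assms(2) assms(3)[of e2] show ?thesis by (auto simp: Int_commute)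
  next
    case 2
    with adjacent assms(2) assms(3)[of e1] show ?thesis by auto
  next
    case 3
    with adjacent assms(1,2) show ?thesis unfolding proper_edges_def by auto
  qed
qed

lemma proper_edges_recolor_closed:
  assumes "proper_edges c F" and "inj \<sigma>"
    and closed: "\<And>f. f \<in> F \<Longrightarrow> f \<inter> C \<noteq> {} \<Longrightarrow> f \<subseteq> C"
  shows "proper_edges (\<lambda>f. if f \<inter> C \<noteq> {} then \<sigma> (c f) else c f) F"
  unfolding proper_edges_def
proof (intro ballI impI)
  fix e1 e2 assume "e1 \<in> F" "e2 \<in> F" and adjacent: "e1 \<noteq> e2 \<and> e1 \<inter> e2 \<noteq> {}"
  then have "c e1 \<noteq> c e2" using assms(1) unfolding proper_edges_def by blast
  moreover have "e1 \<inter> C \<noteq> {} \<longleftrightarrow> e2 \<inter> C \<noteq> {}"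
    using closed[OF \<open>e1 \<in> F\<close>] closed[OF \<open>e2 \<in> F\<close>] adjacent by blast
  ultimately show "(if e1 \<inter> C \<noteq> {} then \<sigma> (c e1) else c e1) \<noteq>
      (if e2 \<inter> C \<noteq> {} then \<sigma> (c e2) else c e2)"
    using \<open>inj \<sigma>\<close> by (auto dest: injD)
qed

theorem proper_edge_coloring_forest:
  assumes "finite F" and "acyclic_graph F" and "\<forall>f\<in>F. \<exists>u v. f = {u, v} \<and> u \<noteq> v"
    and "\<And>x. degree F x \<le> D"
  shows "\<exists>c. proper_edges c F \<and> c ` F \<subseteq> {..<D}"
  using assms
proof (induction F rule: finite_induct)
  case empty
  then show ?case by (simp add: proper_edges_def)
next
  case (insert e F)
  obtain u v where e: "e = {u, v}" "u \<noteq> v" using insert.prems(2) by blast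
  have deg_e: "degree F x < D" if "x \<in> e" for x
    using insert.prems(3)[of x] that by (simp add: degree_insert[OF insert.hyps])
  have "degree F x \<le> D" for x
    using insert.prems(3)[of x] by (simp add: degree_insert[OF insert.hyps] split: if_splits)
  then obtain c where c: "proper_edges c F" "c ` F \<subseteq> {..<D}"
    using insert.IH acyclic_graph_subset[OF insert.prems(1)] insert.prems(2) by blast
  have "u \<in> e" "v \<in> e" using e(1) by simp_all
  obtain a where a: "a < D" "\<forall>f\<in>F. u \<in> f \<longrightarrow> c f \<noteq> a"
    by (rule exists_color_unused_at[OF \<open>finite F\<close> deg_e[OF \<open>u \<in> e\<close>]])
  obtain b where b: "b < D" "\<forall>f\<in>F. v \<in> f \<longrightarrow> c f \<noteq> b"
    by (rule exists_color_unused_at[OF \<open>finite F\<close> deg_e[OF \<open>v \<in> e\<close>]])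
  define C where "C = {x. (v, x) \<in> (adj_rel F)\<^sup>*}"
  have "u \<notin> C"
  proof -
    have "insert e F - {{v, u}} = F" using insert.hyps e by (auto simp: insert_commute)
    with acyclic_graph_edge_not_rtrancl[OF insert.prems(1), of v u] e show ?thesis
      unfolding C_def by (auto simp: insert_commute)
  qed
  have closed: "f \<subseteq> C" if "f \<in> F" "f \<inter> C \<noteq> {}" for f
  proof -
    obtain p q where "f = {p, q}" using insert.prems(2) \<open>f \<in> F\<close> by blast
    with \<open>f \<in> F\<close> have "(p, q) \<in> adj_rel F" "(q, p) \<in> adj_rel F"
      by (auto simp: adj_rel_def insert_commute)
    with \<open>f = {p, q}\<close> \<open>f \<inter> C \<noteq> {}\<close> show ?thesis
      unfolding C_def by (auto intro: rtrancl_into_rtrancl)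
  qed
  define c' where "c' f = (if f \<inter> C \<noteq> {} then transpose a b (c f) else c f)" for f
  have "proper_edges c' F"
    unfolding c'_def by (rule proper_edges_recolor_closed[OF c(1) inj_transpose closed])
  moreover have "c' f \<noteq> a" if "f \<in> F" "f \<inter> e \<noteq> {}" for f
  proof -
    from that e consider "u \<in> f" | "v \<in> f" by blast
    then show ?thesis
    proof cases
      case 1
      with closed[OF \<open>f \<in> F\<close>] \<open>u \<notin> C\<close> have "f \<inter> C = {}" by blast
      with 1 a(2) \<open>f \<in> F\<close> show ?thesis unfolding c'_def by simp
    next
      case 2
      then have "f \<inter> C \<noteq> {}" unfolding C_def by blast
      moreover have "c f \<noteq> b" using 2 b(2) \<open>f \<in> F\<close> by blast
      ultimately show ?thesis unfolding c'_def by (auto simp: transpose_eq_iff)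
    qed
  qed
  ultimately have "proper_edges (c'(e := a)) (insert e F)"
    by (rule proper_edges_insert[OF _ insert.hyps(2)])
  moreover have "(c'(e := a)) ` insert e F \<subseteq> {..<D}"
    using c(2) a(1) b(1) unfolding c'_def by (auto simp: transpose_def)
  ultimately show ?case by blast
qed

lemma exists_superset_with_card:
  assumes "finite V" "A \<subseteq> V" "card A \<le> k" "k \<le> card V"
  obtains S where "A \<subseteq> S" "S \<subseteq> V" "card S = k"
proof -
  have "finite A" using assms(1,2) by (rule finite_subset[rotated])
  have "k - card A \<le> card (V - A)" using assms by (simp add: card_Diff_subset \<open>finite A\<close>)
  then obtain T where T: "T \<subseteq> V - A" "card T = k - card A" "finite T"
    by (rule obtain_subset_with_card_n)
  have "card (A \<union> T) = card A + card T"
    using T \<open>finite A\<close> by (intro card_Un_disjoint) auto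
  with T assms that[of "A \<union> T"] show ?thesis by auto
qed

lemma k_proper_coloring_inj_on_edges_at:
  assumes "is_tree V E" and "2 \<le> k" "k \<le> card V" and "k_proper_coloring V E k c"
  shows "inj_on c {e \<in> E. v \<in> e}"
proof (rule inj_onI, rule ccontr)
  fix e1 e2 assume e1: "e1 \<in> {e \<in> E. v \<in> e}" and e2: "e2 \<in> {e \<in> E. v \<in> e}"
    and "c e1 = c e2" "e1 \<noteq> e2"
  have sg: "simple_graph V E" and ac: "acyclic_graph E"
    using assms(1) unfolding is_tree_def by auto
  obtain a where a: "e1 = {v, a}" "a \<noteq> v" "a \<in> V"
    using simple_graph_edge_at[OF sg] e1 by blast
  obtain b where b: "e2 = {v, b}" "b \<noteq> v" "b \<in> V"
    using simple_graph_edge_at[OF sg] e2 by blast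
  have "a \<noteq> b" using a b \<open>e1 \<noteq> e2\<close> by auto
  have "finite V" using sg unfolding simple_graph_def by simp
  moreover have "card {a, b} \<le> k" using \<open>a \<noteq> b\<close> assms(2) by simp
  ultimately obtain S where S: "{a, b} \<subseteq> S" "S \<subseteq> V" "card S = k"
    using exists_superset_with_card[of V "{a, b}" k] a(3) b(3) assms(3) by blast
  with assms(4) have "has_proper_S_tree V E c S"
    unfolding k_proper_coloring_def by blast
  then obtain V' E' where "E' \<subseteq> E" "S \<subseteq> V'" "connected_graph V' E'" "proper_edges c E'"
    unfolding has_proper_S_tree_def is_tree_def by blast
  have "a \<in> V'" "b \<in> V'" using S(1) \<open>S \<subseteq> V'\<close> by auto
  with \<open>connected_graph V' E'\<close> have "(a, b) \<in> (adj_rel E')\<^sup>*" "(b, a) \<in> (adj_rel E')\<^sup>*"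
    unfolding connected_graph_def by blast+
  moreover have "{v, a} \<in> E" "{v, b} \<in> E" using e1 e2 a(1) b(1) by simp_all
  ultimately have "e1 \<in> E'" "e2 \<in> E'"
    using acyclic_connection_uses_edge[OF ac _ a(2) _ _ \<open>E' \<subseteq> E\<close>]
      acyclic_connection_uses_edge[OF ac _ b(2) _ _ \<open>E' \<subseteq> E\<close>]
      a(1) b(1) \<open>a \<noteq> b\<close> by metis+
  moreover have "v \<in> e1 \<inter> e2" using e1 e2 by simp
  ultimately have "c e1 \<noteq> c e2"
    using \<open>proper_edges c E'\<close> \<open>e1 \<noteq> e2\<close> unfolding proper_edges_def by blast
  with \<open>c e1 = c e2\<close> show False by contradiction
qed

lemma degree_le_card_colors:
  assumes "is_tree V E" and "2 \<le> k" "k \<le> card V" and "k_proper_coloring V E k c"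
  shows "degree E v \<le> card (c ` E)"
proof -
  have "finite E"
    using assms(1) simple_graph_finite_edges unfolding is_tree_def by blast
  have "degree E v = card (c ` {e \<in> E. v \<in> e})"
    unfolding degree_def using k_proper_coloring_inj_on_edges_at[OF assms] by (simp add: card_image)
  also have "\<dots> \<le> card (c ` E)"
    using \<open>finite E\<close> by (intro card_mono) auto
  finally show ?thesis .
qed

lemma proper_tree_coloring_is_k_proper:
  assumes "is_tree V E" and "proper_edges c E"
  shows "k_proper_coloring V E k c"
  using assms unfolding k_proper_coloring_def has_proper_S_tree_def by blast

lemma proper_index_eqI:
  assumes "k_proper_coloring V E k c" and "card (c ` E) = m"
    and "\<And>c. k_proper_coloring V E k c \<Longrightarrow> m \<le> card (c ` E)"
  shows "proper_index k V E = m"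
  unfolding proper_index_def using assms by (intro Least_equality) blast+

theorem mainTheorem9:
  fixes V :: "'a set" and E :: "'a set set" and k :: nat
  assumes "is_tree V E"
    and "card V \<ge> 3"
    and "3 \<le> k" and "k \<le> card V"
  shows "proper_index k V E = max_degree V E"
proof -
  have sg: "simple_graph V E" and ac: "acyclic_graph E"
    using assms(1) unfolding is_tree_def by auto
  have "V \<noteq> {}" using assms(2) by auto
  then obtain v where v: "degree E v = max_degree V E"
    by (rule max_degree_attained[OF sg])
  have lower: "max_degree V E \<le> card (c ` E)" if "k_proper_coloring V E k c" for c
    using degree_le_card_colors[OF assms(1) _ assms(4) that, of v] assms(3) unfolding v by simp
  have "\<forall>f\<in>E. \<exists>u v. f = {u, v} \<and> u \<noteq> v"
    using simple_graph_edge_cases[OF sg] by blast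
  then obtain c where c: "proper_edges c E" "c ` E \<subseteq> {..<max_degree V E}"
    using proper_edge_coloring_forest[OF simple_graph_finite_edges[OF sg] ac _
      degree_le_max_degree[OF sg]] by blast
  have k_proper: "k_proper_coloring V E k c"
    using proper_tree_coloring_is_k_proper[OF assms(1) c(1)] .
  have "card (c ` E) \<le> max_degree V E"
    using card_mono[OF _ c(2)] by simp
  with lower[OF k_proper] have "card (c ` E) = max_degree V E" by simp
  with k_proper lower show ?thesis by (intro proper_index_eqI)
qed

end
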